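(* Let $X$ be a real Banach space, let $V$ be a linear subspace of $X$ and let $x\in S_X$. Then the following are equivalent: (1) For every $v\in V$, $\Vert v+x\Vert=1+\Vert v\Vert$. (2) For every $v^*\in V^*$ there exists $x^*\in X^*$ extending $v^*$ (i.e. $x^*|_V=v^*$) such that $\Vert x^*\Vert=\Vert v^*\Vert$ and $x^*(x)=\Vert v^*\Vert$.
   Context: All Banach spaces are real. $S_X$ denotes the unit sphere of $X$ and $X^*$ its topological dual. *)

theory Defs
  imports "HOL-Analysis.Analysis"
begin

text \<open>A continuous (bounded) linear functional on a linear subspace V, i.e. an element of V^*.
  Its values outside V are irrelevant.\<close>
definition bounded_linear_functional_on :: "'a::real_normed_vector set \<Rightarrow> ('a \<Rightarrow> real) \<Rightarrow> bool" where
  "bounded_linear_functional_on V f \<longleftrightarrow>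
     (\<forall>u\<in>V. \<forall>w\<in>V. f (u + w) = f u + f w) \<and>
     (\<forall>c. \<forall>u\<in>V. f (c *\<^sub>R u) = c * f u) \<and>
     (\<exists>K. \<forall>u\<in>V. \<bar>f u\<bar> \<le> K * norm u)"

definition dual_norm_on :: "'a::real_normed_vector set \<Rightarrow> ('a \<Rightarrow> real) \<Rightarrow> real" where
  "dual_norm_on V f = Sup {\<bar>f u\<bar> | u. u \<in> V \<and> norm u \<le> 1}"

end

theory Submission
  imports Defs
begin

text \<open>
  (1) \<Longrightarrow> (2): put g (v + t x) = f v + t \<parallel>f\<parallel> on V \<oplus> \<real>x. Since -v \<in> V, the hypothesis
  gives \<parallel>v - x\<parallel> = \<parallel>v + x\<parallel> = 1 + \<parallel>v\<parallel>, which is exactly what makes the value \<parallel>f\<parallel> at x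
  admissible in the one-dimensional Hahn--Banach step; a Hahn--Banach extension of g to X
  then has norm \<parallel>f\<parallel> and attains it at x.
  (2) \<Longrightarrow> (1): for v \<in> V take a norming functional h of v (norm 1, h v = \<parallel>v\<parallel>); its
  restriction to V has norm 1, so (2) yields g of norm 1 with g v = \<parallel>v\<parallel> and g x = 1,
  whence \<parallel>v + x\<parallel> \<ge> g (v + x) = \<parallel>v\<parallel> + 1 \<ge> \<parallel>v + x\<parallel>.
  Hahn--Banach is proved by Zorn's lemma on graphs of dominated partial linear functionals.
\<close>

section \<open>Hahn--Banach for graphs\<close>

definition sublinear :: "('a::real_vector \<Rightarrow> real) \<Rightarrow> bool" where
  "sublinear p \<longleftrightarrow> (\<forall>x y. p (x + y) \<le> p x + p y) \<and> (\<forall>c x. 0 \<le> c \<longrightarrow> p (c *\<^sub>R x) = c * p x)"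

lemma sublinear_scaled_norm: "0 \<le> N \<Longrightarrow> sublinear (\<lambda>x. N * norm x)"
  unfolding sublinear_def
  by (auto simp: distrib_left[symmetric] intro!: mult_left_mono norm_triangle_ineq)

text \<open>Partial linear functionals are represented by their graphs, i.e. single-valued linear
  subspaces of 'a \<times> real; graph_extension M x c extends the domain of M by x, with value c
  at x.\<close>

definition graph_extension :: "('a::real_vector \<times> real) set \<Rightarrow> 'a \<Rightarrow> real \<Rightarrow> ('a \<times> real) set" where
  "graph_extension M x c = {q + t *\<^sub>R (x, c) | q t. q \<in> M}"

lemma graph_extension_memI: "(a, b) \<in> M \<Longrightarrow> (a + t *\<^sub>R x, b + t * c) \<in> graph_extension M x c"
  unfolding graph_extension_def by force

lemma graph_extension_memE:
  assumes "(y, d) \<in> graph_extension M x c"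
  obtains a b t where "(a, b) \<in> M" "y = a + t *\<^sub>R x" "d = b + t * c"
  using assms unfolding graph_extension_def by force

lemma subset_graph_extension: "M \<subseteq> graph_extension M x c"
  using graph_extension_memI[where t = 0] by fastforce

lemma subspace_graph_extension:
  assumes "subspace M"
  shows "subspace (graph_extension M x c)"
proof -
  have "graph_extension M x c = {q + r |q r. q \<in> M \<and> r \<in> span {(x, c)}}"
    unfolding graph_extension_def span_singleton by blast
  then show ?thesis
    using subspace_sums[OF assms subspace_span] by simp
qed

lemma single_valued_graph_extension:
  assumes M: "subspace M" "single_valued M" and x: "x \<notin> Domain M"
  shows "single_valued (graph_extension M x c)"
proof (rule single_valuedI)
  fix y d d' assume "(y, d) \<in> graph_extension M x c" "(y, d') \<in> graph_extension M x c"
  then obtain a b t a' b' t' where ab: "(a, b) \<in> M" "y = a + t *\<^sub>R x" "d = b + t * c"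
    and ab': "(a', b') \<in> M" "y = a' + t' *\<^sub>R x" "d' = b' + t' * c"
    by (metis graph_extension_memE)
  have "t = t'"
  proof (rule ccontr)
    assume "t \<noteq> t'"
    have diff: "(a - a', b - b') \<in> M"
      using subspace_diff[OF M(1) ab(1) ab'(1)] by simp
    have "((a - a') /\<^sub>R (t' - t), (b - b') / (t' - t)) \<in> M"
      using subspace_scale[OF M(1) diff, of "inverse (t' - t)"] by (simp add: divide_inverse_commute)
    moreover have "a - a' = (t' - t) *\<^sub>R x"
      using ab(2) ab'(2) by (simp add: algebra_simps)
    ultimately have "(x, (b - b') / (t' - t)) \<in> M"
      using \<open>t \<noteq> t'\<close> by simp
    with x show False by blast
  qed
  with ab ab' M(2) show "d = d'"
    by (metis add_right_cancel single_valuedD)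
qed

lemma dominated_extension_point:
  assumes p: "sublinear p" and M: "subspace M" "(a, b) \<in> M" and "0 < t"
    and c: "\<forall>(a, b)\<in>M. c \<le> p (a + x) - b"
  shows "b + t * c \<le> p (a + t *\<^sub>R x)"
proof -
  have "(a /\<^sub>R t, b / t) \<in> M"
    using subspace_scale[OF M, of "inverse t"] by (simp add: divide_inverse_commute)
  then have "c \<le> p (a /\<^sub>R t + x) - b / t"
    using c by auto
  also have "a /\<^sub>R t + x = (a + t *\<^sub>R x) /\<^sub>R t"
    using \<open>0 < t\<close> by (simp add: algebra_simps)
  also have "p ((a + t *\<^sub>R x) /\<^sub>R t) = p (a + t *\<^sub>R x) / t"
    using p \<open>0 < t\<close> unfolding sublinear_def by (simp add: divide_inverse_commute)
  finally have "c \<le> (p (a + t *\<^sub>R x) - b) / t"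
    by (simp add: diff_divide_distrib)
  then show ?thesis
    using \<open>0 < t\<close> by (simp add: pos_le_divide_eq algebra_simps)
qed

text \<open>The two-sided condition on c is the classical one-dimensional Hahn--Banach step; its
  lower half is the upper half for the extension by -x with value -c.\<close>

lemma dominated_graph_extension:
  assumes p: "sublinear p" and M: "subspace M" "\<forall>(a, b)\<in>M. b \<le> p a"
    and c: "\<forall>(a, b)\<in>M. b - p (a - x) \<le> c \<and> c \<le> p (a + x) - b"
  shows "\<forall>(y, d)\<in>graph_extension M x c. d \<le> p y"
proof clarify
  fix y d assume "(y, d) \<in> graph_extension M x c"
  then obtain a b t where ab: "(a, b) \<in> M" and y: "y = a + t *\<^sub>R x" and d: "d = b + t * c"
    by (rule graph_extension_memE)
  consider "t = 0" | "t > 0" | "t < 0" by linarith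
  then show "d \<le> p y"
  proof cases
    case 1
    then show ?thesis using M(2) ab y d by auto
  next
    case 2
    then show ?thesis
      using dominated_extension_point[OF p M(1) ab, of t c x] c y d by auto
  next
    case 3
    have "\<forall>(a, b)\<in>M. - c \<le> p (a + - x) - b"
      using c by auto
    then show ?thesis
      using dominated_extension_point[OF p M(1) ab, of "- t" "- c" "- x"] 3 y d by simp
  qed
qed

lemma dominated_extension_value_exists:
  assumes p: "sublinear p" and M: "subspace M" "\<forall>(a, b)\<in>M. b \<le> p a"
  shows "\<exists>c. \<forall>(a, b)\<in>M. b - p (a - x) \<le> c \<and> c \<le> p (a + x) - b"
proof -
  have sep: "b - p (a - x) \<le> p (a' + x) - b'" if "(a, b) \<in> M" "(a', b') \<in> M" for a b a' b'
  proof -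
    have "b + b' \<le> p (a + a')"
      using M subspace_add[OF M(1) that] by auto
    also have "a + a' = (a - x) + (a' + x)"
      by simp
    also have "p ((a - x) + (a' + x)) \<le> p (a - x) + p (a' + x)"
      using p unfolding sublinear_def by blast
    finally show ?thesis by simp
  qed
  define L where "L = {b - p (a - x) | a b. (a, b) \<in> M}"
  have "(0, 0) \<in> M"
    using subspace_0[OF M(1)] by (simp add: zero_prod_def)
  then have "L \<noteq> {}" and "bdd_above L"
    using sep unfolding L_def bdd_above_def by blast+
  have "b - p (a - x) \<le> Sup L \<and> Sup L \<le> p (a + x) - b" if "(a, b) \<in> M" for a b
  proof
    show "b - p (a - x) \<le> Sup L"
      using that \<open>bdd_above L\<close> unfolding L_def by (blast intro: cSup_upper)
    show "Sup L \<le> p (a + x) - b"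
      using that sep \<open>L \<noteq> {}\<close> unfolding L_def by (blast intro: cSup_least)
  qed
  then show ?thesis by blast
qed

lemma subspace_Union_chain:
  assumes "subset.chain A C" "C \<noteq> {}" "\<forall>X\<in>C. subspace X"
  shows "subspace (\<Union>C)"
  unfolding subspace_def
proof (intro conjI ballI allI)
  show "0 \<in> \<Union>C"
    using assms(2,3) subspace_0 by blast
next
  fix y z assume "y \<in> \<Union>C" "z \<in> \<Union>C"
  then obtain X where "X \<in> C" "y \<in> X" "z \<in> X"
    using assms(1) unfolding subset_chain_def by blast
  then show "y + z \<in> \<Union>C"
    using assms(3) subspace_add by blast
next
  fix r :: real and y assume "y \<in> \<Union>C"
  then show "r *\<^sub>R y \<in> \<Union>C"
    using assms(3) subspace_scale by blast
qed

lemma single_valued_Union_chain: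
  assumes "subset.chain A C" "\<forall>X\<in>C. single_valued X"
  shows "single_valued (\<Union>C)"
proof (rule single_valuedI)
  fix y d d' assume "(y, d) \<in> \<Union>C" "(y, d') \<in> \<Union>C"
  then obtain X where "X \<in> C" "(y, d) \<in> X" "(y, d') \<in> X"
    using assms(1) unfolding subset_chain_def by blast
  then show "d = d'"
    using assms(2) single_valuedD by metis
qed

lemma linear_of_total_graph:
  fixes M :: "('a::real_vector \<times> real) set"
  assumes "subspace M" "single_valued M" "Domain M = UNIV"
  shows "\<exists>g. linear g \<and> (\<forall>(a, b)\<in>M. g a = b)"
proof -
  define g where "g y = (THE d. (y, d) \<in> M)" for y
  have g: "g a = b" if "(a, b) \<in> M" for a b
    unfolding g_def using that single_valuedD[OF assms(2)] by (intro the_equality) blast+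
  have graph: "(y, g y) \<in> M" for y
  proof -
    obtain d where "(y, d) \<in> M"
      using assms(3) by blast
    then show ?thesis
      using g by simp
  qed
  have "linear g"
  proof (rule linearI)
    show "g (y + z) = g y + g z" for y z
      using g subspace_add[OF assms(1) graph graph] by simp
    show "g (r *\<^sub>R y) = r *\<^sub>R g y" for r y
      using g subspace_scale[OF assms(1) graph] by simp
  qed
  then show ?thesis
    using g by blast
qed

theorem hahn_banach_graph:
  assumes p: "sublinear p" and G: "subspace G" "single_valued G" "\<forall>(a, b)\<in>G. b \<le> p a"
  shows "\<exists>g. linear g \<and> (\<forall>(a, b)\<in>G. g a = b) \<and> (\<forall>y. g y \<le> p y)"
proof -
  define A where "A = {M. subspace M \<and> single_valued M \<and> (\<forall>(a, b)\<in>M. b \<le> p a) \<and> G \<subseteq> M}"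
  have "\<exists>M\<in>A. \<forall>X\<in>A. M \<subseteq> X \<longrightarrow> X = M"
  proof (rule subset_Zorn_nonempty)
    show "A \<noteq> {}"
      using G unfolding A_def by auto
    fix C assume C: "C \<noteq> {}" "subset.chain A C"
    then have "C \<subseteq> A"
      by (simp add: subset_chain_def)
    then have "subspace (\<Union>C)" "single_valued (\<Union>C)"
      using subspace_Union_chain[OF C(2,1)] single_valued_Union_chain[OF C(2)]
      unfolding A_def by blast+
    with \<open>C \<subseteq> A\<close> C(1) show "\<Union>C \<in> A"
      unfolding A_def by blast
  qed
  then obtain M where "M \<in> A" and maximal: "\<And>X. X \<in> A \<Longrightarrow> M \<subseteq> X \<Longrightarrow> X = M"
    by blast
  then have M: "subspace M" "single_valued M" "\<forall>(a, b)\<in>M. b \<le> p a" "G \<subseteq> M"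
    unfolding A_def by auto
  have total: "x \<in> Domain M" for x
  proof (rule ccontr)
    assume x: "x \<notin> Domain M"
    obtain c where "\<forall>(a, b)\<in>M. b - p (a - x) \<le> c \<and> c \<le> p (a + x) - b"
      using dominated_extension_value_exists[OF p M(1,3)] by blast
    then have "graph_extension M x c \<in> A"
      using subspace_graph_extension[OF M(1)] single_valued_graph_extension[OF M(1,2) x]
        dominated_graph_extension[OF p M(1,3)] subset_graph_extension[of M x c] M(4)
      unfolding A_def by blast
    moreover have "(x, c) \<in> graph_extension M x c"
      using graph_extension_memI[of 0 0 M 1 x c] subspace_0[OF M(1)] by (simp add: zero_prod_def)
    ultimately show False
      using maximal[OF _ subset_graph_extension[of M x c]] x by blast
  qed
  then obtain g where "linear g" and g: "\<forall>(a, b)\<in>M. g a = b"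
    using linear_of_total_graph[OF M(1,2)] by auto
  moreover have "g y \<le> p y" for y
  proof -
    obtain d where "(y, d) \<in> M"
      using total by blast
    then show ?thesis
      using M(3) g by fastforce
  qed
  ultimately show ?thesis
    using M(4) by (intro exI[of _ g] conjI) auto
qed

corollary hahn_banach_graph_norm:
  assumes G: "subspace G" "single_valued G" "\<forall>(a, b)\<in>G. b \<le> N * norm a" and "0 \<le> N"
  shows "\<exists>g. bounded_linear g \<and> (\<forall>(a, b)\<in>G. g a = b) \<and> onorm g \<le> N"
proof -
  obtain g where g: "linear g" "\<forall>(a, b)\<in>G. g a = b" "\<forall>y. g y \<le> N * norm y"
    using hahn_banach_graph[OF sublinear_scaled_norm[OF \<open>0 \<le> N\<close>] G] by blast
  have bound: "norm (g y) \<le> N * norm y" for y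
    using g(3)[rule_format, of y] g(3)[rule_format, of "- y"] linear_neg[OF g(1), of y] by auto
  have "bounded_linear g"
    using linear_add[OF g(1)] linear_scale[OF g(1)] bound
    by (intro bounded_linear_intro[where K = N]) (auto simp: mult.commute)
  moreover have "onorm g \<le> N"
    using bound \<open>0 \<le> N\<close> by (intro onorm_bound) auto
  ultimately show ?thesis
    using g(2) by blast
qed

lemma norming_functional:
  fixes v :: "'a::real_normed_vector"
  assumes "v \<noteq> 0"
  shows "\<exists>g. bounded_linear g \<and> onorm g \<le> 1 \<and> g v = norm v"
proof -
  let ?G = "graph_extension {0} v (norm v)"
  have "subspace ?G"
    by (rule subspace_graph_extension) simp
  moreover have "single_valued ?G"
    by (rule single_valued_graph_extension[OF subspace_single_0])
      (use assms in \<open>auto simp: single_valued_def zero_prod_def\<close>)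
  moreover have "\<forall>(a, b)\<in>?G. b \<le> 1 * norm a"
    by (rule dominated_graph_extension[OF sublinear_scaled_norm subspace_single_0])
      (auto simp: zero_prod_def)
  ultimately obtain g where g: "bounded_linear g" "\<forall>(a, b)\<in>?G. g a = b" "onorm g \<le> 1"
    using hahn_banach_graph_norm[of ?G 1] by auto
  have "(0 + 1 *\<^sub>R v, 0 + 1 * norm v) \<in> ?G"
    by (rule graph_extension_memI) (simp add: zero_prod_def)
  with g show ?thesis
    by auto
qed

section \<open>The dual norm on a subspace\<close>

lemma bounded_linear_functional_on_bounded_linear:
  assumes "bounded_linear g"
  shows "bounded_linear_functional_on V g"
proof -
  interpret g: bounded_linear g by fact
  obtain K where "\<forall>u. norm (g u) \<le> norm u * K"
    using g.bounded by blast
  then show ?thesis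
    unfolding bounded_linear_functional_on_def by (auto simp: g.add g.scale mult.commute)
qed

lemma dual_norm_on_upper:
  assumes "bounded_linear_functional_on V f" "u \<in> V" "norm u \<le> 1"
  shows "\<bar>f u\<bar> \<le> dual_norm_on V f"
proof -
  obtain K where K: "\<forall>w\<in>V. \<bar>f w\<bar> \<le> K * norm w"
    using assms(1) unfolding bounded_linear_functional_on_def by blast
  have "\<bar>f w\<bar> \<le> \<bar>K\<bar>" if "w \<in> V" "norm w \<le> 1" for w
  proof -
    have "K * norm w \<le> \<bar>K\<bar> * norm w"
      by (intro mult_right_mono) auto
    also have "\<dots> \<le> \<bar>K\<bar>"
      using that(2) by (simp add: mult_left_le)
    finally have "K * norm w \<le> \<bar>K\<bar>" .
    then show ?thesis
      using K that(1) by fastforce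
  qed
  then have "bdd_above {\<bar>f w\<bar> | w. w \<in> V \<and> norm w \<le> 1}"
    by (intro bdd_aboveI[where M = "\<bar>K\<bar>"]) auto
  then show ?thesis
    unfolding dual_norm_on_def using assms(2,3) by (blast intro: cSup_upper)
qed

lemma dual_norm_on_nonneg:
  assumes "subspace V" "bounded_linear_functional_on V f"
  shows "0 \<le> dual_norm_on V f"
  using dual_norm_on_upper[OF assms(2) subspace_0[OF assms(1)]] by simp

lemma abs_le_dual_norm_on:
  assumes V: "subspace V" and f: "bounded_linear_functional_on V f" and "u \<in> V"
  shows "\<bar>f u\<bar> \<le> dual_norm_on V f * norm u"
proof (cases "u = 0")
  case True
  have "f (0 *\<^sub>R 0) = 0 * f 0"
    using f subspace_0[OF V] unfolding bounded_linear_functional_on_def by blast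
  with True show ?thesis
    by simp
next
  case False
  have "\<bar>f (u /\<^sub>R norm u)\<bar> \<le> dual_norm_on V f"
    using \<open>u \<in> V\<close> V False by (intro dual_norm_on_upper[OF f]) (auto simp: subspace_scale)
  moreover have "f (u /\<^sub>R norm u) = f u / norm u"
    using f \<open>u \<in> V\<close> unfolding bounded_linear_functional_on_def by (simp add: divide_inverse_commute)
  ultimately show ?thesis
    using False by (simp add: abs_div pos_divide_le_eq)
qed

lemma dual_norm_on_le:
  assumes "subspace V" "\<forall>u\<in>V. norm u \<le> 1 \<longrightarrow> \<bar>f u\<bar> \<le> K"
  shows "dual_norm_on V f \<le> K"
  unfolding dual_norm_on_def
proof (rule cSup_least)
  show "{\<bar>f u\<bar> | u. u \<in> V \<and> norm u \<le> 1} \<noteq> {}"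
    using subspace_0[OF assms(1)] by force
qed (use assms(2) in blast)

lemma dual_norm_on_norming_functional:
  assumes V: "subspace V" and h: "bounded_linear h" "onorm h \<le> 1" "h v = norm v"
    and "v \<in> V" "v \<noteq> 0"
  shows "dual_norm_on V h = 1"
proof (rule antisym)
  have "\<bar>h u\<bar> \<le> 1" if "norm u \<le> 1" for u
  proof -
    have "\<bar>h u\<bar> \<le> onorm h * norm u"
      using onorm[OF h(1)] by simp
    also have "\<dots> \<le> 1 * 1"
      using h(2) that onorm_pos_le[OF h(1)] by (intro mult_mono) auto
    finally show ?thesis by simp
  qed
  then show "dual_norm_on V h \<le> 1"
    using V by (intro dual_norm_on_le) auto
  show "1 \<le> dual_norm_on V h"
    using abs_le_dual_norm_on[OF V bounded_linear_functional_on_bounded_linear[OF h(1)] \<open>v \<in> V\<close>]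
      h(3) \<open>v \<noteq> 0\<close> by simp
qed

section \<open>Norm-attaining extensions\<close>

lemma subspace_graph_on:
  assumes V: "subspace V" and f: "bounded_linear_functional_on V f"
  shows "subspace {(u, f u) | u. u \<in> V}"
  unfolding subspace_def
proof (intro conjI ballI allI)
  have "f (0 *\<^sub>R 0) = 0 * f 0"
    using f subspace_0[OF V] unfolding bounded_linear_functional_on_def by blast
  then show "0 \<in> {(u, f u) | u. u \<in> V}"
    using subspace_0[OF V] by (auto simp: zero_prod_def)
next
  fix p q assume "p \<in> {(u, f u) | u. u \<in> V}" "q \<in> {(u, f u) | u. u \<in> V}"
  then obtain u w where "p = (u, f u)" "q = (w, f w)" "u \<in> V" "w \<in> V"
    by blast
  then show "p + q \<in> {(u, f u) | u. u \<in> V}"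
    using f subspace_add[OF V] unfolding bounded_linear_functional_on_def by auto
next
  fix c :: real and p assume "p \<in> {(u, f u) | u. u \<in> V}"
  then obtain u where "p = (u, f u)" "u \<in> V"
    by blast
  then show "c *\<^sub>R p \<in> {(u, f u) | u. u \<in> V}"
    using f subspace_scale[OF V] unfolding bounded_linear_functional_on_def by auto
qed

lemma norm_add_admissible_value:
  assumes V: "subspace V" and add: "\<forall>v\<in>V. norm (v + x) = 1 + norm v"
    and "0 \<le> N" "u \<in> V" "b \<le> N * norm u"
  shows "b - N * norm (u - x) \<le> N \<and> N \<le> N * norm (u + x) - b"
proof -
  have "norm (u - x) = norm (- u + x)"
    by (simp add: norm_minus_commute)
  also have "\<dots> = 1 + norm u"
    using add subspace_neg[OF V \<open>u \<in> V\<close>] by force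
  finally have "norm (u - x) = 1 + norm u" .
  then show ?thesis
    using add assms(3-5) by (simp add: distrib_left)
qed

lemma attaining_norm_preserving_extension:
  fixes V :: "'a::real_normed_vector set"
  assumes V: "subspace V" and x: "norm x = 1" and add: "\<forall>v\<in>V. norm (v + x) = 1 + norm v"
    and f: "bounded_linear_functional_on V f"
  shows "\<exists>g. bounded_linear g \<and> (\<forall>v\<in>V. g v = f v) \<and>
           onorm g = dual_norm_on V f \<and> g x = dual_norm_on V f"
proof -
  define N where "N = dual_norm_on V f"
  define \<Gamma> where "\<Gamma> = {(u, f u) | u. u \<in> V}"
  have N: "0 \<le> N" "\<forall>u\<in>V. \<bar>f u\<bar> \<le> N * norm u"
    unfolding N_def using dual_norm_on_nonneg[OF V f] abs_le_dual_norm_on[OF V f] by auto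
  have "x \<notin> V"
    using add x subspace_neg[OF V] by force
  then have "x \<notin> Domain \<Gamma>"
    unfolding \<Gamma>_def by blast
  have \<Gamma>: "subspace \<Gamma>" "single_valued \<Gamma>" "\<forall>(a, b)\<in>\<Gamma>. b \<le> N * norm a"
    unfolding \<Gamma>_def using subspace_graph_on[OF V f] N(2)
    by (auto simp: single_valued_def abs_le_iff)
  have "\<forall>(a, b)\<in>\<Gamma>. b - N * norm (a - x) \<le> N \<and> N \<le> N * norm (a + x) - b"
    unfolding \<Gamma>_def using norm_add_admissible_value[OF V add N(1)] N(2) by (auto simp: abs_le_iff)
  then have dominated: "\<forall>(a, b)\<in>graph_extension \<Gamma> x N. b \<le> N * norm a"
    using dominated_graph_extension[OF sublinear_scaled_norm[OF N(1)] \<Gamma>(1)] \<Gamma>(3) by simp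
  obtain g where g: "bounded_linear g" "\<forall>(a, b)\<in>graph_extension \<Gamma> x N. g a = b" "onorm g \<le> N"
    using hahn_banach_graph_norm[OF subspace_graph_extension[OF \<Gamma>(1)]
        single_valued_graph_extension[OF \<Gamma>(1,2) \<open>x \<notin> Domain \<Gamma>\<close>] dominated N(1)]
    by blast
  have "g v = f v" if "v \<in> V" for v
  proof -
    have "(v, f v) \<in> graph_extension \<Gamma> x N"
      using subset_graph_extension[of \<Gamma> x N] that unfolding \<Gamma>_def by blast
    then show ?thesis
      using g(2) by auto
  qed
  moreover have "(x, N) \<in> graph_extension \<Gamma> x N"
    using graph_extension_memI[of 0 0 \<Gamma> 1 x N] subspace_0[OF \<Gamma>(1)] by (simp add: zero_prod_def)
  then have "g x = N"
    using g(2) by auto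
  moreover have "onorm g = N"
    using onorm[OF g(1), of x] x \<open>g x = N\<close> g(3) by simp
  ultimately show ?thesis
    using g(1) unfolding N_def by blast
qed

lemma norm_add_eq_of_attaining_extensions:
  fixes V :: "'a::real_normed_vector set"
  assumes V: "subspace V" and x: "norm x = 1"
    and ext: "\<forall>f. bounded_linear_functional_on V f \<longrightarrow>
               (\<exists>g. bounded_linear g \<and> (\<forall>v\<in>V. g v = f v) \<and>
                    onorm g = dual_norm_on V f \<and> g x = dual_norm_on V f)"
    and "v \<in> V"
  shows "norm (v + x) = 1 + norm v"
proof (cases "v = 0")
  case True
  with x show ?thesis by simp
next
  case False
  obtain h where h: "bounded_linear h" "onorm h \<le> 1" "h v = norm v"
    using norming_functional[OF False] by blast
  have "dual_norm_on V h = 1"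
    using dual_norm_on_norming_functional[OF V h \<open>v \<in> V\<close> False] .
  then obtain g where g: "bounded_linear g" "\<forall>u\<in>V. g u = h u" "onorm g = 1" "g x = 1"
    using ext bounded_linear_functional_on_bounded_linear[OF h(1)] by fastforce
  have "norm v + 1 = g (v + x)"
    using g(1,2,4) h(3) \<open>v \<in> V\<close> linear_add[OF bounded_linear.linear[OF g(1)]] by simp
  also have "\<dots> \<le> norm (v + x)"
    using onorm[OF g(1), of "v + x"] g(3) by simp
  finally show ?thesis
    using norm_triangle_ineq[of v x] x by simp
qed

theorem mainTheorem1:
  fixes V :: "'a::banach set" and x :: 'a
  assumes "subspace V" and "norm x = 1"
  shows "(\<forall>v\<in>V. norm (v + x) = 1 + norm v) \<longleftrightarrow>
         (\<forall>f. bounded_linear_functional_on V f \<longrightarrow>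
            (\<exists>g::'a \<Rightarrow> real. bounded_linear g \<and> (\<forall>v\<in>V. g v = f v) \<and>
                 onorm g = dual_norm_on V f \<and> g x = dual_norm_on V f))"
proof
  assume "\<forall>v\<in>V. norm (v + x) = 1 + norm v"
  then show "\<forall>f. bounded_linear_functional_on V f \<longrightarrow>
      (\<exists>g. bounded_linear g \<and> (\<forall>v\<in>V. g v = f v) \<and>
           onorm g = dual_norm_on V f \<and> g x = dual_norm_on V f)"
    using attaining_norm_preserving_extension[OF assms] by blast
next
  assume "\<forall>f. bounded_linear_functional_on V f \<longrightarrow>
      (\<exists>g::'a \<Rightarrow> real. bounded_linear g \<and> (\<forall>v\<in>V. g v = f v) \<and>
           onorm g = dual_norm_on V f \<and> g x = dual_norm_on V f)"
  then show "\<forall>v\<in>V. norm (v + x) = 1 + norm v"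
    using norm_add_eq_of_attaining_extensions[OF assms] by blast
qed

end
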